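(* Let $n\ge1$ and let $\kappa(n):=\|e_1\vee\cdots\vee e_n\|_{\pi s+,\ell_1}$. Then $\kappa(n)=\|e_1\vee\cdots\vee e_n\|_{\pi s+,\ell_1^n}$, and for every $m$ with $n\le m\le\infty$ we have $c_{\pi,s+}(n,\ell_1^m)=\kappa(n)$. Furthermore, $$\sup_E\frac{c_{\pi,s+}(n,E)}{c_+(E)^n}=\sup_{E:\,c_+(E)=1}c_{\pi,s+}(n,E)=c_{\pi,s+}(n,\ell_1)=c_{\pi,s+}(n,\ell_1^n)=\kappa(n),$$ where the suprema are over all ordered normed spaces $E$.
   Context: All vector spaces are real. An ordered normed space is a real normed space $E$ together with a closed convex cone $E_+\subseteq E$ (positive elements) such that $E=E_+-E_+$ and such that, writing $\|x\|_+:=\inf\{\|y\|+\|z\|: x=y-z,\ y,z\in E_+\}$, the constant $c_+(E):=\sup\{\|x\|_+:\|x\|\le1\}$ is finite. $E^{\otimes n}$ is the algebraic $n$-th tensor power, $E^{\vee n}$ the subspace of symmetric tensors, $x^{\otimes n}:=x\otimes\cdots\otimes x$, and $x_1\vee\cdots\vee x_n:=\frac1{n!}\sum_{\sigma\in\mathfrak S_n}x_{\sigma(1)}\otimes\cdots\otimes x_{\sigma(n)}$. Norms: $\|\mathbf{x}\|_{\pi,E}:=\inf\{\sum_k|a_k|\,\|x_{1k}\|\cdots\|x_{nk}\| : \mathbf{x}=\sum_k a_k x_{1k}\otimes\cdots\otimes x_{nk}\}$ and $\|\mathbf{x}\|_{\pi s+,E}:=\inf\{\sum_k|a_k|\,\|x_k\|^n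 : \mathbf{x}=\sum_k a_k x_k^{\otimes n},\ x_k\in E_+\}$ (finite sums, $a_k\in\mathbb{R}$). The positive polarization constant is $c_{\pi,s+}(n,E):=\sup\{\|\mathbf{x}\|_{\pi s+,E}/\|\mathbf{x}\|_{\pi,E}:0\ne\mathbf{x}\in E^{\vee n}\}$. For $1\le m<\infty$, $\ell_1^m$ is $\mathbb{R}^m$ with the $\ell_1$-norm, $\ell_1^\infty=\ell_1$, both ordered coordinatewise (positive cone = vectors with nonnegative coordinates); $(e_i)$ is the standard basis. *)

theory Defs
  imports "HOL-Analysis.Analysis" "HOL-Library.Function_Algebras"
begin

instantiation "fun" :: (type, real_vector) real_vector
begin
definition scaleR_fun :: "real \<Rightarrow> ('a \<Rightarrow> 'b) \<Rightarrow> 'a \<Rightarrow> 'b"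
  where "scaleR_fun c f = (\<lambda>x. c *\<^sub>R f x)"
instance
  by standard (auto simp: scaleR_fun_def fun_eq_iff scaleR_add_right scaleR_add_left)
end

definition is_norm_on :: "'a::real_vector set \<Rightarrow> ('a \<Rightarrow> real) \<Rightarrow> bool" where
  "is_norm_on V N \<longleftrightarrow> subspace V \<and>
     (\<forall>x\<in>V. 0 \<le> N x \<and> (N x = 0 \<longleftrightarrow> x = 0)) \<and>
     (\<forall>x\<in>V. \<forall>y\<in>V. N (x + y) \<le> N x + N y) \<and>
     (\<forall>x\<in>V. \<forall>c. N (c *\<^sub>R x) = \<bar>c\<bar> * N x)"

definition pos_norm :: "'a::real_vector set \<Rightarrow> ('a \<Rightarrow> real) \<Rightarrow> 'a set \<Rightarrow> 'a \<Rightarrow> real" where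
  "pos_norm V N C x = Inf {N y + N z | y z. y \<in> C \<and> z \<in> C \<and> x = y - z}"

definition c_plus :: "'a::real_vector set \<Rightarrow> ('a \<Rightarrow> real) \<Rightarrow> 'a set \<Rightarrow> real" where
  "c_plus V N C = Sup {pos_norm V N C x | x. x \<in> V \<and> N x \<le> 1}"

definition ordered_normed_space :: "'a::real_vector set \<Rightarrow> ('a \<Rightarrow> real) \<Rightarrow> 'a set \<Rightarrow> bool" where
  "ordered_normed_space V N C \<longleftrightarrow>
     is_norm_on V N \<and> C \<subseteq> V \<and>
     (\<forall>x\<in>C. \<forall>y\<in>C. x + y \<in> C) \<and> (\<forall>x\<in>C. \<forall>c\<ge>0. c *\<^sub>R x \<in> C) \<and> C \<noteq> {} \<and>
     (\<forall>X x. (\<forall>k. X k \<in> C) \<and> x \<in> V \<and> (\<lambda>k. N (X k - x)) \<longlonglongrightarrow> 0 \<longrightarrow> x \<in> C) \<and>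
     (\<forall>x\<in>V. \<exists>y\<in>C. \<exists>z\<in>C. x = y - z) \<and>
     bdd_above {pos_norm V N C x | x. x \<in> V \<and> N x \<le> 1}"

text \<open>The algebraic tensor power V^{\<otimes>n} is realised faithfully (injectively) inside the
algebraic dual of the space of n-linear forms on V: a tensor is the functional it induces
on n-linear forms. An n-tuple of vectors is a function nat \<Rightarrow> 'a, of which only the
entries with index < n matter.\<close>

definition multilinear_form :: "'a::real_vector set \<Rightarrow> nat \<Rightarrow> ((nat \<Rightarrow> 'a) \<Rightarrow> real) \<Rightarrow> bool" where
  "multilinear_form V n \<phi> \<longleftrightarrow>
     (\<forall>ys. \<phi> ys = \<phi> (\<lambda>i. if i < n then ys i else 0)) \<and>
     (\<forall>i<n. \<forall>ys. (\<forall>j<n. ys j \<in> V) \<longrightarrow>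
        (\<forall>u\<in>V. \<forall>v\<in>V. \<phi> (ys(i := u + v)) = \<phi> (ys(i := u)) + \<phi> (ys(i := v))) \<and>
        (\<forall>u\<in>V. \<forall>c. \<phi> (ys(i := c *\<^sub>R u)) = c * \<phi> (ys(i := u))))"

type_synonym 'a tensor = "((nat \<Rightarrow> 'a) \<Rightarrow> real) \<Rightarrow> real"

definition etensor :: "'a::real_vector set \<Rightarrow> nat \<Rightarrow> (nat \<Rightarrow> 'a) \<Rightarrow> 'a tensor" where
  "etensor V n xs = (\<lambda>\<phi>. if multilinear_form V n \<phi> then \<phi> xs else 0)"

definition tpow :: "'a::real_vector set \<Rightarrow> nat \<Rightarrow> 'a \<Rightarrow> 'a tensor" where
  "tpow V n x = etensor V n (\<lambda>_. x)"

definition tensor_space :: "'a::real_vector set \<Rightarrow> nat \<Rightarrow> 'a tensor set" where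
  "tensor_space V n = {t. \<exists>(K::nat) a xs. (\<forall>k<K. \<forall>i<n. xs k i \<in> V) \<and>
                        t = (\<lambda>\<phi>. \<Sum>k<K. a k * etensor V n (xs k) \<phi>)}"

definition sym_tensors :: "'a::real_vector set \<Rightarrow> nat \<Rightarrow> 'a tensor set" where
  "sym_tensors V n = {t \<in> tensor_space V n. \<forall>\<sigma>. \<sigma> permutes {..<n} \<longrightarrow>
                          t = (\<lambda>\<phi>. t (\<lambda>ys. \<phi> (ys \<circ> \<sigma>)))}"

definition vee :: "'a::real_vector set \<Rightarrow> nat \<Rightarrow> (nat \<Rightarrow> 'a) \<Rightarrow> 'a tensor" where
  "vee V n xs = (\<lambda>\<phi>. (1 / fact n) * (\<Sum>\<sigma>\<in>{\<sigma>. \<sigma> permutes {..<n}}. etensor V n (xs \<circ> \<sigma>) \<phi>))"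

definition pi_norm :: "'a::real_vector set \<Rightarrow> ('a \<Rightarrow> real) \<Rightarrow> nat \<Rightarrow> 'a tensor \<Rightarrow> ereal" where
  "pi_norm V N n t = Inf {ereal (\<Sum>k<K. \<bar>a k\<bar> * (\<Prod>i<n. N (xs k i))) | (K::nat) a xs.
       (\<forall>k<K. \<forall>i<n. xs k i \<in> V) \<and> t = (\<lambda>\<phi>. \<Sum>k<K. a k * etensor V n (xs k) \<phi>)}"

definition pis_plus_norm :: "'a::real_vector set \<Rightarrow> ('a \<Rightarrow> real) \<Rightarrow> 'a set \<Rightarrow> nat \<Rightarrow> 'a tensor \<Rightarrow> ereal" where
  "pis_plus_norm V N C n t = Inf {ereal (\<Sum>k<K. \<bar>a k\<bar> * N (x k) ^ n) | (K::nat) a x.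
       (\<forall>k<K. x k \<in> C) \<and> t = (\<lambda>\<phi>. \<Sum>k<K. a k * tpow V n (x k) \<phi>)}"

definition c_pi_splus :: "nat \<Rightarrow> 'a::real_vector set \<Rightarrow> ('a \<Rightarrow> real) \<Rightarrow> 'a set \<Rightarrow> ereal" where
  "c_pi_splus n V N C = Sup {pis_plus_norm V N C n t / pi_norm V N n t | t.
       t \<in> sym_tensors V n \<and> t \<noteq> (\<lambda>\<phi>. 0)}"

section \<open>The spaces l_1^m and l_1, ordered coordinatewise (indices start at 0)\<close>

definition l1fin_V :: "nat \<Rightarrow> (nat \<Rightarrow> real) set" where
  "l1fin_V m = {x. \<forall>i\<ge>m. x i = 0}"
definition l1fin_N :: "nat \<Rightarrow> (nat \<Rightarrow> real) \<Rightarrow> real" where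
  "l1fin_N m x = (\<Sum>i<m. \<bar>x i\<bar>)"
definition l1fin_C :: "nat \<Rightarrow> (nat \<Rightarrow> real) set" where
  "l1fin_C m = {x \<in> l1fin_V m. \<forall>i. 0 \<le> x i}"

definition l1_V :: "(nat \<Rightarrow> real) set" where
  "l1_V = {x. summable (\<lambda>i. \<bar>x i\<bar>)}"
definition l1_N :: "(nat \<Rightarrow> real) \<Rightarrow> real" where
  "l1_N x = (\<Sum>i. \<bar>x i\<bar>)"
definition l1_C :: "(nat \<Rightarrow> real) set" where
  "l1_C = {x \<in> l1_V. \<forall>i. 0 \<le> x i}"

text \<open>standard basis vector e_{i+1} (0-indexed)\<close>
definition ebasis :: "nat \<Rightarrow> nat \<Rightarrow> real" where
  "ebasis i = (\<lambda>j. if j = i then 1 else 0)"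

definition kappa :: "nat \<Rightarrow> ereal" where
  "kappa n = pis_plus_norm l1_V l1_N l1_C n (vee l1_V n ebasis)"

end

(*
  If w_1, ..., w_n are positive with norm at most 1, the linear map from l_1 to E
  sending e_i to w_i maps positive vectors to positive vectors and does not increase their norm,
  so it pushes every positive representation of e_1 v ... v e_n to one of w_1 v ... v w_n of
  no larger cost: the latter has positive norm at most kappa(n). A symmetric tensor t is a
  combination of symmetric products x_1 v ... v x_n. Write x_m = a p - b q with p, q positive of
  norm at most 1 and a + b <= (c_+(E) + eps) ||x_m||; since v is multilinear, replacing the slots
  one at a time bounds ||t||_{pi s+} by (kappa(n) + eps) (c_+(E) + eps)^n (||t||_pi + eps), and
  eps -> 0 gives ||t||_{pi s+} <= kappa(n) c_+(E)^n ||t||_pi.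

  In l_1^m and l_1 the n-linear form (y_1, ..., y_n) |-> prod_i y_i(i) shows
  1/n! <= ||e_1 v ... v e_n||_pi <= 1, so the ratio at this tensor is at least its positive norm,
  which equals kappa(n) by comparing l_1^n and l_1 through inclusion and truncation.
*)

theory Submission
  imports Defs
begin

lemma scaleR_fun_apply [simp]: "(c *\<^sub>R f) i = c *\<^sub>R f i"
  by (simp add: scaleR_fun_def)

subsection \<open>Multilinear forms\<close>

lemma multilinear_form_cong:
  assumes "multilinear_form V n \<phi>" "\<forall>i<n. xs i = ys i"
  shows "\<phi> xs = \<phi> ys"
proof -
  have "(\<lambda>i. if i < n then xs i else 0) = (\<lambda>i. if i < n then ys i else 0)"
    using assms(2) by auto
  then show ?thesis
    using assms(1) unfolding multilinear_form_def by metis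
qed

lemma multilinear_form_add:
  assumes "multilinear_form V n \<phi>" "i < n" "\<forall>j<n. ys j \<in> V" "u \<in> V" "v \<in> V"
  shows "\<phi> (ys(i := u + v)) = \<phi> (ys(i := u)) + \<phi> (ys(i := v))"
  using assms unfolding multilinear_form_def by blast

lemma multilinear_form_scaleR:
  assumes "multilinear_form V n \<phi>" "i < n" "\<forall>j<n. ys j \<in> V" "u \<in> V"
  shows "\<phi> (ys(i := c *\<^sub>R u)) = c * \<phi> (ys(i := u))"
  using assms unfolding multilinear_form_def by blast

lemma multilinear_form_zero_slot:
  assumes "multilinear_form V n \<phi>" "subspace V" "i < n" "\<forall>j<n. ys j \<in> V" "ys i = 0"
  shows "\<phi> ys = 0"
proof -
  have "ys = ys(i := (0::real) *\<^sub>R 0)"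
    using assms(5) by auto
  then show ?thesis
    using multilinear_form_scaleR[OF assms(1,3,4), of 0 0] subspace_0[OF assms(2)] by simp
qed

lemma multilinear_form_sum:
  fixes V :: "'a::real_vector set"
  assumes "finite S" and ml: "\<forall>s\<in>S. multilinear_form V n (\<phi> s)"
  shows "multilinear_form V n (\<lambda>ys. \<Sum>s\<in>S. c s * \<phi> s ys)"
  unfolding multilinear_form_def
proof (intro conjI allI impI ballI)
  fix ys :: "nat \<Rightarrow> 'a"
  show "(\<Sum>s\<in>S. c s * \<phi> s ys) = (\<Sum>s\<in>S. c s * \<phi> s (\<lambda>i. if i < n then ys i else 0))"
    using ml multilinear_form_cong by (intro sum.cong) fastforce+
next
  fix i ys u v assume "i < n" "\<forall>j<n. ys j \<in> V" "u \<in> V" "v \<in> V"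
  then have "\<phi> s (ys(i := u + v)) = \<phi> s (ys(i := u)) + \<phi> s (ys(i := v))" if "s \<in> S" for s
    using ml that multilinear_form_add by blast
  then show "(\<Sum>s\<in>S. c s * \<phi> s (ys(i := u + v))) =
      (\<Sum>s\<in>S. c s * \<phi> s (ys(i := u))) + (\<Sum>s\<in>S. c s * \<phi> s (ys(i := v)))"
    by (simp add: distrib_left sum.distrib[symmetric])
next
  fix i ys u r assume "i < n" "\<forall>j<n. ys j \<in> V" "u \<in> V"
  then have "\<phi> s (ys(i := r *\<^sub>R u)) = r * \<phi> s (ys(i := u))" if "s \<in> S" for s
    using ml that multilinear_form_scaleR by blast
  then show "(\<Sum>s\<in>S. c s * \<phi> s (ys(i := r *\<^sub>R u))) = r * (\<Sum>s\<in>S. c s * \<phi> s (ys(i := u)))"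
    by (simp add: sum_distrib_left mult.left_commute)
qed

lemma multilinear_form_permute:
  assumes ml: "multilinear_form V n \<phi>" and \<sigma>: "\<sigma> permutes {..<n}"
  shows "multilinear_form V n (\<lambda>ys. \<phi> (ys \<circ> \<sigma>))"
proof -
  have \<sigma>_lt: "\<sigma> j < n" "inv \<sigma> j < n" if "j < n" for j
    using that permutes_in_image[OF \<sigma>] permutes_in_image[OF permutes_inv[OF \<sigma>]] by auto
  have upd: "ys(i := w) \<circ> \<sigma> = (ys \<circ> \<sigma>)(inv \<sigma> i := w)" for ys :: "nat \<Rightarrow> 'a" and i w
    using permutes_inverses[OF \<sigma>] by (auto simp: fun_eq_iff)
  have trunc: "\<phi> (ys \<circ> \<sigma>) = \<phi> ((\<lambda>i. if i < n then ys i else 0) \<circ> \<sigma>)" for ys :: "nat \<Rightarrow> 'a"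
    by (rule multilinear_form_cong[OF ml]) (simp add: \<sigma>_lt)
  show ?thesis
    unfolding multilinear_form_def upd
  proof (intro conjI allI impI ballI)
    fix i ys u assume i: "i < n" and ys: "\<forall>j<n. ys j \<in> V" and u: "u \<in> V"
    have ys\<sigma>: "\<forall>j<n. (ys \<circ> \<sigma>) j \<in> V"
      using ys \<sigma>_lt by simp
    show "\<phi> ((ys \<circ> \<sigma>)(inv \<sigma> i := u + v)) =
        \<phi> ((ys \<circ> \<sigma>)(inv \<sigma> i := u)) + \<phi> ((ys \<circ> \<sigma>)(inv \<sigma> i := v))" if "v \<in> V" for v
      using multilinear_form_add[OF ml \<sigma>_lt(2)[OF i] ys\<sigma> u that] .
    show "\<phi> ((ys \<circ> \<sigma>)(inv \<sigma> i := c *\<^sub>R u)) = c * \<phi> ((ys \<circ> \<sigma>)(inv \<sigma> i := u))" for c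
      using multilinear_form_scaleR[OF ml \<sigma>_lt(2)[OF i] ys\<sigma> u] .
  qed (rule trunc)
qed

subsection \<open>Elementary and symmetric tensors\<close>

lemma etensor_cong: "\<forall>i<n. xs i = ys i \<Longrightarrow> etensor V n xs = etensor V n ys"
  using multilinear_form_cong unfolding etensor_def by fastforce

lemma vee_apply:
  "vee V n xs \<phi> =
     (if multilinear_form V n \<phi> then (1 / fact n) * (\<Sum>\<sigma>\<in>{\<sigma>. \<sigma> permutes {..<n}}. \<phi> (xs \<circ> \<sigma>))
      else 0)"
  unfolding vee_def etensor_def by simp

lemma vee_eq_sum_etensor:
  "vee V n xs = (\<lambda>\<phi>. \<Sum>\<sigma>\<in>{\<sigma>. \<sigma> permutes {..<n}}. (1 / fact n) * etensor V n (xs \<circ> \<sigma>) \<phi>)"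
  unfolding vee_def by (simp add: sum_distrib_left)

lemma vee_cong:
  assumes "\<forall>i<n. xs i = ys i"
  shows "vee V n xs = vee V n ys"
proof -
  have "etensor V n (xs \<circ> \<sigma>) = etensor V n (ys \<circ> \<sigma>)" if "\<sigma> permutes {..<n}" for \<sigma>
    using assms permutes_in_image[OF that] by (intro etensor_cong) simp
  then show ?thesis
    unfolding vee_def by simp
qed

lemma multilinear_form_vee: "multilinear_form V n (\<lambda>xs. vee V n xs \<phi>)"
proof (cases "multilinear_form V n \<phi>")
  case True
  have "(\<lambda>xs. vee V n xs \<phi>) =
          (\<lambda>xs. \<Sum>\<sigma>\<in>{\<sigma>. \<sigma> permutes {..<n}}. (1 / fact n) * \<phi> (xs \<circ> \<sigma>))"
    by (simp add: vee_apply True sum_distrib_left)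
  moreover have "multilinear_form V n
      (\<lambda>xs. \<Sum>\<sigma>\<in>{\<sigma>. \<sigma> permutes {..<n}}. (1 / fact n) * \<phi> (xs \<circ> \<sigma>))"
    by (rule multilinear_form_sum) (simp_all add: finite_permutations multilinear_form_permute[OF True])
  ultimately show ?thesis by simp
next
  case False
  then have "(\<lambda>xs. vee V n xs \<phi>) = (\<lambda>xs. 0)"
    by (simp add: vee_apply)
  then show ?thesis
    by (simp add: multilinear_form_def)
qed

lemma vee_update_lincomb:
  assumes "subspace V" "i < n" "\<forall>j<n. xs j \<in> V" "u \<in> V" "v \<in> V"
  shows "vee V n (xs(i := a *\<^sub>R u + b *\<^sub>R v)) =
           (\<lambda>\<phi>. a * vee V n (xs(i := u)) \<phi> + b * vee V n (xs(i := v)) \<phi>)"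
proof
  fix \<phi>
  let ?vee = "\<lambda>xs. vee V n xs \<phi>"
  have "?vee (xs(i := a *\<^sub>R u + b *\<^sub>R v)) = ?vee (xs(i := a *\<^sub>R u)) + ?vee (xs(i := b *\<^sub>R v))"
    using assms by (intro multilinear_form_add[OF multilinear_form_vee]) (simp_all add: subspace_scale)
  then show "?vee (xs(i := a *\<^sub>R u + b *\<^sub>R v)) = a * ?vee (xs(i := u)) + b * ?vee (xs(i := v))"
    using assms by (simp add: multilinear_form_scaleR[OF multilinear_form_vee])
qed

lemma vee_eq_indexed_sum:
  obtains h where "\<forall>k<(fact n :: nat). h k permutes {..<n}"
    and "vee V n xs = (\<lambda>\<phi>. \<Sum>k<fact n. (1 / fact n) * etensor V n (xs \<circ> h k) \<phi>)"
proof -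
  have card: "card {\<sigma>. \<sigma> permutes {..<n}} = fact n"
    by (simp add: card_permutations)
  obtain h where h: "bij_betw h {0..<(fact n :: nat)} {\<sigma>. \<sigma> permutes {..<n}}"
    using ex_bij_betw_nat_finite[OF finite_permutations[OF finite_lessThan[of n]]] unfolding card by blast
  then have "\<forall>k<fact n. h k permutes {..<n}"
    by (auto simp: bij_betw_def)
  moreover have "vee V n xs = (\<lambda>\<phi>. \<Sum>k<fact n. (1 / fact n) * etensor V n (xs \<circ> h k) \<phi>)"
    unfolding vee_eq_sum_etensor sum.reindex_bij_betw[OF h, symmetric] by (simp add: atLeast0LessThan)
  ultimately show ?thesis
    using that by blast
qed

lemma vee_in_tensor_space:
  assumes "\<forall>i<n. xs i \<in> V"
  shows "vee V n xs \<in> tensor_space V n"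
proof -
  obtain h where h: "\<forall>k<(fact n :: nat). h k permutes {..<n}"
    and vee: "vee V n xs = (\<lambda>\<phi>. \<Sum>k<fact n. (1 / fact n) * etensor V n (xs \<circ> h k) \<phi>)"
    by (rule vee_eq_indexed_sum)
  have "\<forall>k<(fact n :: nat). \<forall>i<n. (xs \<circ> h k) i \<in> V"
    using h assms permutes_in_image by fastforce
  then show ?thesis
    unfolding tensor_space_def vee
    by (intro CollectI exI[of _ "fact n"] exI[of _ "\<lambda>_. 1 / fact n"] exI[of _ "\<lambda>k. xs \<circ> h k"]) simp
qed

lemma vee_permute_forms:
  assumes "\<tau> permutes {..<n}"
  shows "vee V n xs = (\<lambda>\<phi>. vee V n xs (\<lambda>ys. \<phi> (ys \<circ> \<tau>)))"
proof
  fix \<phi> :: "(nat \<Rightarrow> 'a) \<Rightarrow> real"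
  have "multilinear_form V n \<phi>" if "multilinear_form V n (\<lambda>ys. \<phi> (ys \<circ> \<tau>))"
    using multilinear_form_permute[OF that permutes_inv[OF assms]]
    by (simp add: o_assoc[symmetric] permutes_inv_o(2)[OF assms])
  then have ml_iff: "multilinear_form V n (\<lambda>ys. \<phi> (ys \<circ> \<tau>)) \<longleftrightarrow> multilinear_form V n \<phi>"
    using multilinear_form_permute[OF _ assms] by blast
  have "(\<Sum>\<sigma>\<in>{\<sigma>. \<sigma> permutes {..<n}}. \<phi> (xs \<circ> \<sigma> \<circ> \<tau>)) = (\<Sum>\<sigma>\<in>{\<sigma>. \<sigma> permutes {..<n}}. \<phi> (xs \<circ> \<sigma>))"
    using sum_permutations_compose_right[OF assms, of "\<lambda>\<sigma>. \<phi> (xs \<circ> \<sigma>)"] by (simp add: o_assoc)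
  then show "vee V n xs \<phi> = vee V n xs (\<lambda>ys. \<phi> (ys \<circ> \<tau>))"
    unfolding vee_apply ml_iff by simp
qed

lemma vee_in_sym_tensors: "\<forall>i<n. xs i \<in> V \<Longrightarrow> vee V n xs \<in> sym_tensors V n"
  unfolding sym_tensors_def using vee_in_tensor_space vee_permute_forms by blast

lemma sym_tensor_eq_sum_vee:
  assumes t: "t \<in> sym_tensors V n" and rep: "t = (\<lambda>\<phi>. \<Sum>k<K. a k * etensor V n (xs k) \<phi>)"
  shows "t = (\<lambda>\<phi>. \<Sum>k<K. a k * vee V n (xs k) \<phi>)"
proof
  fix \<phi>
  show "t \<phi> = (\<Sum>k<K. a k * vee V n (xs k) \<phi>)"
  proof (cases "multilinear_form V n \<phi>")
    case True
    let ?P = "{\<sigma>. \<sigma> permutes {..<n}}"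
    have "t \<phi> = t (\<lambda>ys. \<phi> (ys \<circ> \<sigma>))" if "\<sigma> \<in> ?P" for \<sigma>
      using t that unfolding sym_tensors_def by (metis (mono_tags, lifting) mem_Collect_eq)
    also have "t (\<lambda>ys. \<phi> (ys \<circ> \<sigma>)) = (\<Sum>k<K. a k * \<phi> (xs k \<circ> \<sigma>))" if "\<sigma> \<in> ?P" for \<sigma>
      using multilinear_form_permute[OF True] that unfolding rep etensor_def by simp
    finally have "(\<Sum>\<sigma>\<in>?P. t \<phi>) = (\<Sum>\<sigma>\<in>?P. \<Sum>k<K. a k * \<phi> (xs k \<circ> \<sigma>))"
      by (rule sum.cong[OF refl])
    then have "t \<phi> = (1 / fact n) * (\<Sum>\<sigma>\<in>?P. \<Sum>k<K. a k * \<phi> (xs k \<circ> \<sigma>))"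
      by (simp add: card_permutations field_simps)
    then show ?thesis
      unfolding vee_apply using True
      by (simp add: sum.swap[of _ "{..<K}"] sum_distrib_left sum_distrib_right mult_ac)
  next
    case False
    then show ?thesis
      unfolding rep vee_apply etensor_def by simp
  qed
qed

lemma multilinear_form_linear_comp:
  assumes "linear T" "T ` V \<subseteq> W" "multilinear_form W n \<phi>"
  shows "multilinear_form V n (\<lambda>zs. \<phi> (T \<circ> zs))"
proof -
  have upd: "T \<circ> zs(i := w) = (T \<circ> zs)(i := T w)" for zs i w
    by (simp add: fun_eq_iff)
  have "\<phi> (T \<circ> zs) = \<phi> (T \<circ> (\<lambda>i. if i < n then zs i else 0))" for zs
    by (rule multilinear_form_cong[OF assms(3)]) simp
  moreover have "\<forall>j<n. (T \<circ> zs) j \<in> W" if "\<forall>j<n. zs j \<in> V" for zs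
    using that assms(2) by auto
  ultimately show ?thesis
    unfolding multilinear_form_def upd
    using assms(2) multilinear_form_add[OF assms(3)] multilinear_form_scaleR[OF assms(3)]
    by (simp add: image_subset_iff linear_add[OF assms(1)] linear_scale[OF assms(1)])
qed

lemma etensor_sum_image_eq:
  assumes "linear T" "T ` V \<subseteq> W"
    and "(\<lambda>\<phi>. \<Sum>s\<in>S. a s * etensor V n (xs s) \<phi>) = (\<lambda>\<phi>. \<Sum>s\<in>S'. b s * etensor V n (ys s) \<phi>)"
  shows "(\<lambda>\<phi>. \<Sum>s\<in>S. a s * etensor W n (T \<circ> xs s) \<phi>) =
         (\<lambda>\<phi>. \<Sum>s\<in>S'. b s * etensor W n (T \<circ> ys s) \<phi>)"
proof
  fix \<phi>
  show "(\<Sum>s\<in>S. a s * etensor W n (T \<circ> xs s) \<phi>) = (\<Sum>s\<in>S'. b s * etensor W n (T \<circ> ys s) \<phi>)"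
  proof (cases "multilinear_form W n \<phi>")
    case True
    then show ?thesis
      using fun_cong[OF assms(3), of "\<lambda>zs. \<phi> (T \<circ> zs)"] multilinear_form_linear_comp[OF assms(1,2)]
      unfolding etensor_def by simp
  next
    case False
    then show ?thesis
      unfolding etensor_def by simp
  qed
qed

lemma pis_plus_norm_vee_image_le:
  assumes T: "linear T" "T ` V \<subseteq> W" "T ` C \<subseteq> D" "C \<subseteq> V"
    and norm_T: "\<forall>u\<in>C. 0 \<le> M (T u) \<and> M (T u) \<le> N u"
  shows "pis_plus_norm W M D n (vee W n (T \<circ> xs)) \<le> pis_plus_norm V N C n (vee V n xs)"
  unfolding pis_plus_norm_def
proof (rule Inf_mono)
  fix r assume "r \<in> {ereal (\<Sum>k<K. \<bar>a k\<bar> * N (x k) ^ n) | (K::nat) a x.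
       (\<forall>k<K. x k \<in> C) \<and> vee V n xs = (\<lambda>\<phi>. \<Sum>k<K. a k * tpow V n (x k) \<phi>)}"
  then obtain K :: nat and a x where r: "r = ereal (\<Sum>k<K. \<bar>a k\<bar> * N (x k) ^ n)"
    and xC: "\<forall>k<K. x k \<in> C" and rep: "vee V n xs = (\<lambda>\<phi>. \<Sum>k<K. a k * tpow V n (x k) \<phi>)"
    by blast
  have "vee W n (T \<circ> xs) = (\<lambda>\<phi>. \<Sum>k<K. a k * tpow W n (T (x k)) \<phi>)"
    using etensor_sum_image_eq[OF T(1,2) rep[unfolded vee_eq_sum_etensor tpow_def]]
    by (simp add: vee_eq_sum_etensor tpow_def o_assoc comp_def)
  moreover have "(\<Sum>k<K. \<bar>a k\<bar> * M (T (x k)) ^ n) \<le> (\<Sum>k<K. \<bar>a k\<bar> * N (x k) ^ n)"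
    using norm_T xC by (intro sum_mono mult_left_mono power_mono) auto
  moreover have "\<forall>k<K. T (x k) \<in> D"
    using T(3) xC by auto
  ultimately show "\<exists>r'\<in>{ereal (\<Sum>k<K. \<bar>a k\<bar> * M (x k) ^ n) | (K::nat) a x.
       (\<forall>k<K. x k \<in> D) \<and> vee W n (T \<circ> xs) = (\<lambda>\<phi>. \<Sum>k<K. a k * tpow W n (x k) \<phi>)}. r' \<le> r"
    unfolding r by (intro bexI[of _ "ereal (\<Sum>k<K. \<bar>a k\<bar> * M (T (x k)) ^ n)"]) (auto intro!: exI[of _ K])
qed

lemma pi_norm_vee_le_prod:
  assumes "\<forall>i<n. xs i \<in> V"
  shows "pi_norm V N n (vee V n xs) \<le> ereal (\<Prod>i<n. N (xs i))"
proof -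
  obtain h where h: "\<forall>k<(fact n :: nat). h k permutes {..<n}"
    and vee: "vee V n xs = (\<lambda>\<phi>. \<Sum>k<fact n. (1 / fact n) * etensor V n (xs \<circ> h k) \<phi>)"
    by (rule vee_eq_indexed_sum)
  have "\<forall>k<(fact n :: nat). \<forall>i<n. (xs \<circ> h k) i \<in> V"
    using h assms permutes_in_image by fastforce
  then have "pi_norm V N n (vee V n xs) \<le> ereal (\<Sum>k<fact n. \<bar>1 / fact n\<bar> * (\<Prod>i<n. N ((xs \<circ> h k) i)))"
    unfolding pi_norm_def vee
    by (intro Inf_lower CollectI exI[of _ "fact n"] exI[of _ "\<lambda>_. 1 / fact n"] exI[of _ "\<lambda>k. xs \<circ> h k"]) simp
  also have "\<dots> = ereal (\<Prod>i<n. N (xs i))"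
  proof -
    have "(\<Prod>i<n. N ((xs \<circ> h k) i)) = (\<Prod>i<n. N (xs i))" if "k < fact n" for k
      using prod.permute[OF h[rule_format, OF that], of "\<lambda>i. N (xs i)"] by (simp add: comp_def)
    then show ?thesis
      by simp
  qed
  finally show ?thesis .
qed

definition diag_form :: "nat \<Rightarrow> (nat \<Rightarrow> nat \<Rightarrow> real) \<Rightarrow> real"
  where "diag_form n ys = (\<Prod>i<n. ys i i)"

lemma multilinear_form_diag_form: "multilinear_form V n (diag_form n)"
proof -
  have upd: "diag_form n (ys(i := w)) = w i * (\<Prod>j\<in>{..<n} - {i}. ys j j)" if "i < n" for ys i w
  proof -
    have "(\<Prod>j\<in>{..<n} - {i}. (ys(i := w)) j j) = (\<Prod>j\<in>{..<n} - {i}. ys j j)"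
      by (rule prod.cong) auto
    then show ?thesis
      unfolding diag_form_def using that by (simp add: prod.remove[of "{..<n}" i])
  qed
  show ?thesis
    unfolding multilinear_form_def
  proof (intro conjI allI impI ballI)
    show "diag_form n ys = diag_form n (\<lambda>i. if i < n then ys i else 0)" for ys
      unfolding diag_form_def by (rule prod.cong) auto
  qed (simp_all add: upd distrib_right)
qed

lemma diag_form_ebasis_permute:
  assumes "\<sigma> permutes {..<n}"
  shows "diag_form n (ebasis \<circ> \<sigma>) = (if \<sigma> = id then 1 else 0)"
proof (cases "\<sigma> = id")
  case False
  then obtain i where i: "\<sigma> i \<noteq> i"
    by (auto simp: fun_eq_iff)
  then have "i < n"
    using permutes_not_in[OF assms] by auto
  with i have "(\<Prod>j<n. ebasis (\<sigma> j) j) = 0"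
    by (intro prod_zero bexI[of _ i]) (auto simp: ebasis_def)
  with False show ?thesis
    by (simp add: diag_form_def)
qed (simp add: diag_form_def ebasis_def)

lemma vee_ebasis_diag_form: "vee V n ebasis (diag_form n) = 1 / fact n"
proof -
  have "(\<Sum>\<sigma>\<in>{\<sigma>. \<sigma> permutes {..<n}}. diag_form n (ebasis \<circ> \<sigma>)) =
      (\<Sum>\<sigma>\<in>{\<sigma>. \<sigma> permutes {..<n}}. if \<sigma> = id then 1 else 0)"
    by (rule sum.cong) (simp_all add: diag_form_ebasis_permute)
  then have "(\<Sum>\<sigma>\<in>{\<sigma>. \<sigma> permutes {..<n}}. diag_form n (ebasis \<circ> \<sigma>)) = 1"
    by (simp add: sum.delta' finite_permutations permutes_id)
  then show ?thesis
    unfolding vee_apply using multilinear_form_diag_form by simp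
qed

lemma pi_norm_vee_ebasis_ge:
  assumes coord: "\<And>x j. x \<in> V \<Longrightarrow> \<bar>x j\<bar> \<le> N x"
  shows "ereal (1 / fact n) \<le> pi_norm V N n (vee V n ebasis)"
  unfolding pi_norm_def
proof (rule Inf_greatest)
  fix r assume "r \<in> {ereal (\<Sum>k<K. \<bar>a k\<bar> * (\<Prod>i<n. N (xs k i))) | (K::nat) a xs.
       (\<forall>k<K. \<forall>i<n. xs k i \<in> V) \<and> vee V n ebasis = (\<lambda>\<phi>. \<Sum>k<K. a k * etensor V n (xs k) \<phi>)}"
  then obtain K :: nat and a xs where r: "r = ereal (\<Sum>k<K. \<bar>a k\<bar> * (\<Prod>i<n. N (xs k i)))"
    and xs: "\<forall>k<K. \<forall>i<n. xs k i \<in> V" and rep: "vee V n ebasis = (\<lambda>\<phi>. \<Sum>k<K. a k * etensor V n (xs k) \<phi>)"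
    by blast
  have "1 / fact n = (\<Sum>k<K. a k * diag_form n (xs k))"
    using fun_cong[OF rep, of "diag_form n"] vee_ebasis_diag_form multilinear_form_diag_form
    by (simp add: etensor_def)
  also have "\<dots> \<le> (\<Sum>k<K. \<bar>a k * diag_form n (xs k)\<bar>)"
    by (rule order_trans[OF abs_ge_self sum_abs])
  also have "\<dots> \<le> (\<Sum>k<K. \<bar>a k\<bar> * (\<Prod>i<n. N (xs k i)))"
    using xs coord unfolding diag_form_def abs_mult abs_prod
    by (intro sum_mono mult_left_mono prod_mono) auto
  finally show "ereal (1 / fact n) \<le> r"
    unfolding r by simp
qed

subsection \<open>Positive representations of bounded cost\<close>

(* A real-valued witness for pis_plus_norm t <= r: unlike the extended-real infimum, it is
   closed under sums and scalar multiples. *)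
definition has_pos_rep :: "'a::real_vector set \<Rightarrow> ('a \<Rightarrow> real) \<Rightarrow> 'a set \<Rightarrow> nat \<Rightarrow> 'a tensor \<Rightarrow> real \<Rightarrow> bool"
  where "has_pos_rep V N C n t r \<longleftrightarrow>
    (\<exists>(K::nat) a x. (\<forall>k<K. x k \<in> C) \<and> t = (\<lambda>\<phi>. \<Sum>k<K. a k * tpow V n (x k) \<phi>) \<and>
                  (\<Sum>k<K. \<bar>a k\<bar> * N (x k) ^ n) \<le> r)"

lemma pis_plus_norm_le_if_has_pos_rep:
  "has_pos_rep V N C n t r \<Longrightarrow> pis_plus_norm V N C n t \<le> ereal r"
  unfolding has_pos_rep_def pis_plus_norm_def
  by (elim exE conjE, rule Inf_lower2) auto

lemma has_pos_rep_if_pis_plus_norm_less: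
  assumes "pis_plus_norm V N C n t < ereal r"
  shows "has_pos_rep V N C n t r"
proof -
  obtain K :: nat and a x where "\<forall>k<K. x k \<in> C" "t = (\<lambda>\<phi>. \<Sum>k<K. a k * tpow V n (x k) \<phi>)"
    "ereal (\<Sum>k<K. \<bar>a k\<bar> * N (x k) ^ n) < ereal r"
    using assms unfolding pis_plus_norm_def Inf_less_iff by blast
  then show ?thesis
    unfolding has_pos_rep_def by (intro exI[of _ K] exI[of _ a] exI[of _ x]) auto
qed

lemma has_pos_rep_mono: "has_pos_rep V N C n t r \<Longrightarrow> r \<le> r' \<Longrightarrow> has_pos_rep V N C n t r'"
  unfolding has_pos_rep_def by (elim exE conjE) (intro exI conjI, assumption+, linarith)

lemma has_pos_rep_zero: "has_pos_rep V N C n (\<lambda>\<phi>. 0) 0"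
  unfolding has_pos_rep_def by (intro exI[of _ 0]) simp

lemma has_pos_rep_scale:
  assumes "has_pos_rep V N C n t r"
  shows "has_pos_rep V N C n (\<lambda>\<phi>. b * t \<phi>) (\<bar>b\<bar> * r)"
proof -
  obtain K :: nat and a x where x: "\<forall>k<K. x k \<in> C" and t: "t = (\<lambda>\<phi>. \<Sum>k<K. a k * tpow V n (x k) \<phi>)"
    and cost: "(\<Sum>k<K. \<bar>a k\<bar> * N (x k) ^ n) \<le> r"
    using assms unfolding has_pos_rep_def by blast
  have "(\<lambda>\<phi>. b * t \<phi>) = (\<lambda>\<phi>. \<Sum>k<K. (b * a k) * tpow V n (x k) \<phi>)"
    unfolding t by (simp add: sum_distrib_left mult.assoc)
  moreover have "(\<Sum>k<K. \<bar>b * a k\<bar> * N (x k) ^ n) \<le> \<bar>b\<bar> * r"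
    using mult_left_mono[OF cost abs_ge_zero[of b]] by (simp add: sum_distrib_left abs_mult mult.assoc)
  ultimately show ?thesis
    unfolding has_pos_rep_def using x by (intro exI[of _ K] exI[of _ "\<lambda>k. b * a k"] exI[of _ x]) simp
qed

lemma sum_lessThan_add_split: "(\<Sum>k<(K1::nat) + K2. g k) = (\<Sum>k<K1. g k) + (\<Sum>k<K2. g (K1 + k))"
  by (induction K2) (auto simp: add.assoc)

lemma has_pos_rep_add:
  assumes "has_pos_rep V N C n t1 r1" "has_pos_rep V N C n t2 r2"
  shows "has_pos_rep V N C n (\<lambda>\<phi>. t1 \<phi> + t2 \<phi>) (r1 + r2)"
proof -
  obtain K1 :: nat and a1 x1 where h1: "\<forall>k<K1. x1 k \<in> C" "t1 = (\<lambda>\<phi>. \<Sum>k<K1. a1 k * tpow V n (x1 k) \<phi>)"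
    "(\<Sum>k<K1. \<bar>a1 k\<bar> * N (x1 k) ^ n) \<le> r1"
    using assms(1) unfolding has_pos_rep_def by blast
  obtain K2 :: nat and a2 x2 where h2: "\<forall>k<K2. x2 k \<in> C" "t2 = (\<lambda>\<phi>. \<Sum>k<K2. a2 k * tpow V n (x2 k) \<phi>)"
    "(\<Sum>k<K2. \<bar>a2 k\<bar> * N (x2 k) ^ n) \<le> r2"
    using assms(2) unfolding has_pos_rep_def by blast
  define a where "a k = (if k < K1 then a1 k else a2 (k - K1))" for k
  define x where "x k = (if k < K1 then x1 k else x2 (k - K1))" for k
  have split: "(\<Sum>k<K1 + K2. g (a k) (x k)) = (\<Sum>k<K1. g (a1 k) (x1 k)) + (\<Sum>k<K2. g (a2 k) (x2 k))"
    for g :: "real \<Rightarrow> 'a \<Rightarrow> real"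
    unfolding sum_lessThan_add_split by (simp add: a_def x_def)
  have "\<forall>k<K1 + K2. x k \<in> C"
    using h1(1) h2(1) by (auto simp: x_def)
  moreover have "(\<lambda>\<phi>. t1 \<phi> + t2 \<phi>) = (\<lambda>\<phi>. \<Sum>k<K1 + K2. a k * tpow V n (x k) \<phi>)"
    using split[of "\<lambda>a x. a * tpow V n x _"] h1(2) h2(2) by (auto simp: fun_eq_iff)
  moreover have "(\<Sum>k<K1 + K2. \<bar>a k\<bar> * N (x k) ^ n) \<le> r1 + r2"
    using split[of "\<lambda>a x. \<bar>a\<bar> * N x ^ n"] h1(3) h2(3) by simp
  ultimately show ?thesis
    unfolding has_pos_rep_def by (intro exI[of _ "K1 + K2"] exI[of _ a] exI[of _ x]) simp
qed

lemma has_pos_rep_sum: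
  assumes "finite S" "\<forall>s\<in>S. has_pos_rep V N C n (t s) (r s)"
  shows "has_pos_rep V N C n (\<lambda>\<phi>. \<Sum>s\<in>S. b s * t s \<phi>) (\<Sum>s\<in>S. \<bar>b s\<bar> * r s)"
  using assms
proof (induction S rule: finite_induct)
  case empty
  then show ?case
    using has_pos_rep_zero by simp
next
  case (insert s S)
  then show ?case
    using has_pos_rep_add[OF has_pos_rep_scale[of V N C n "t s" "r s" "b s"] insert.IH] by simp
qed

subsection \<open>Ordered normed spaces\<close>

locale ordered_normed =
  fixes V :: "'a::real_vector set" and N :: "'a \<Rightarrow> real" and C :: "'a set"
  assumes ordered_normed_space: "ordered_normed_space V N C"
begin

lemma subspace: "subspace V"
  using ordered_normed_space unfolding ordered_normed_space_def is_norm_on_def by blast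

lemma N_nonneg: "x \<in> V \<Longrightarrow> 0 \<le> N x"
  using ordered_normed_space unfolding ordered_normed_space_def is_norm_on_def by blast

lemma N_eq_0_iff: "x \<in> V \<Longrightarrow> N x = 0 \<longleftrightarrow> x = 0"
  using ordered_normed_space unfolding ordered_normed_space_def is_norm_on_def by blast

lemma N_triangle: "x \<in> V \<Longrightarrow> y \<in> V \<Longrightarrow> N (x + y) \<le> N x + N y"
  using ordered_normed_space unfolding ordered_normed_space_def is_norm_on_def by blast

lemma N_scaleR: "x \<in> V \<Longrightarrow> N (c *\<^sub>R x) = \<bar>c\<bar> * N x"
  using ordered_normed_space unfolding ordered_normed_space_def is_norm_on_def by blast

lemma C_subset_V: "C \<subseteq> V"
  using ordered_normed_space unfolding ordered_normed_space_def by blast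

lemma C_add: "x \<in> C \<Longrightarrow> y \<in> C \<Longrightarrow> x + y \<in> C"
  using ordered_normed_space unfolding ordered_normed_space_def by blast

lemma C_scaleR: "x \<in> C \<Longrightarrow> 0 \<le> c \<Longrightarrow> c *\<^sub>R x \<in> C"
  using ordered_normed_space unfolding ordered_normed_space_def by blast

lemma zero_in_C: "0 \<in> C"
  using ordered_normed_space C_scaleR[of _ 0] unfolding ordered_normed_space_def by force

lemma V_eq_C_minus_C: "x \<in> V \<Longrightarrow> \<exists>y\<in>C. \<exists>z\<in>C. x = y - z"
  using ordered_normed_space unfolding ordered_normed_space_def by blast

lemma bdd_above_pos_norm: "bdd_above {pos_norm V N C x | x. x \<in> V \<and> N x \<le> 1}"
  using ordered_normed_space unfolding ordered_normed_space_def by (elim conjE)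

lemma N_zero: "N 0 = 0"
  using N_eq_0_iff subspace_0[OF subspace] by blast

lemma N_diff_le: "y \<in> V \<Longrightarrow> z \<in> V \<Longrightarrow> N (y - z) \<le> N y + N z"
  using N_triangle[of y "- z"] N_scaleR[of z "-1"] subspace_neg[OF subspace, of z] by simp

lemma N_sum_le: "finite I \<Longrightarrow> \<forall>i\<in>I. f i \<in> V \<Longrightarrow> N (sum f I) \<le> (\<Sum>i\<in>I. N (f i))"
proof (induction I rule: finite_induct)
  case (insert j I)
  then have "N (f j + sum f I) \<le> N (f j) + N (sum f I)"
    by (intro N_triangle) (auto intro: subspace_sum[OF subspace])
  with insert show ?case by simp
qed (simp add: N_zero)

lemma C_sum: "finite I \<Longrightarrow> \<forall>i\<in>I. f i \<in> C \<Longrightarrow> sum f I \<in> C"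
  by (induction I rule: finite_induct) (auto simp: zero_in_C C_add)

lemma N_le_pos_norm:
  assumes "x \<in> V"
  shows "N x \<le> pos_norm V N C x"
  unfolding pos_norm_def
proof (rule cInf_greatest)
  show "{N y + N z | y z. y \<in> C \<and> z \<in> C \<and> x = y - z} \<noteq> {}"
    using V_eq_C_minus_C[OF assms] by blast
  show "N x \<le> w" if "w \<in> {N y + N z | y z. y \<in> C \<and> z \<in> C \<and> x = y - z}" for w
    using that N_diff_le C_subset_V by blast
qed

lemma pos_norm_le_c_plus: "x \<in> V \<Longrightarrow> N x \<le> 1 \<Longrightarrow> pos_norm V N C x \<le> c_plus V N C"
  unfolding c_plus_def by (rule cSup_upper[OF _ bdd_above_pos_norm]) blast

lemma c_plus_nonneg: "0 \<le> c_plus V N C"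
  using pos_norm_le_c_plus N_le_pos_norm subspace_0[OF subspace] N_zero by fastforce

lemma normalize_in_V:
  assumes "x \<in> V" "x \<noteq> 0"
  shows "(1 / N x) *\<^sub>R x \<in> V" "N ((1 / N x) *\<^sub>R x) = 1"
  using assms N_scaleR[of x "1 / N x"] N_nonneg[of x] N_eq_0_iff[of x] subspace_scale[OF subspace]
  by auto

lemma one_le_c_plus:
  assumes "x \<in> V" "x \<noteq> 0"
  shows "1 \<le> c_plus V N C"
  using normalize_in_V[OF assms] N_le_pos_norm pos_norm_le_c_plus by force

lemma normalize_in_C:
  assumes "y \<in> C"
  obtains p where "p \<in> C" "N p \<le> 1" "y = N y *\<^sub>R p"
proof (cases "y = 0")
  case True
  then show ?thesis
    using that zero_in_C N_zero by simp
next
  case False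
  have "y \<in> V"
    using assms C_subset_V by blast
  then show ?thesis
    using that[of "(1 / N y) *\<^sub>R y"] normalize_in_V[OF _ False] C_scaleR[OF assms, of "1 / N y"]
      N_nonneg N_eq_0_iff False by auto
qed

lemma normalized_cone_decomp:
  assumes x: "x \<in> V" and \<eta>: "0 < \<eta>"
  obtains a b p q where "p \<in> C" "q \<in> C" "N p \<le> 1" "N q \<le> 1" "0 \<le> a" "0 \<le> b"
    "x = a *\<^sub>R p - b *\<^sub>R q" "a + b \<le> (c_plus V N C + \<eta>) * N x"
proof (cases "x = 0")
  case True
  then show ?thesis
    using that[of 0 0 0 0] zero_in_C N_zero by simp
next
  case False
  let ?x = "(1 / N x) *\<^sub>R x"
  have Nx: "0 < N x"
    using N_nonneg[OF x] N_eq_0_iff[OF x] False by simp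
  let ?D = "{N y + N z | y z. y \<in> C \<and> z \<in> C \<and> ?x = y - z}"
  have "?D \<noteq> {}"
    using V_eq_C_minus_C[OF normalize_in_V(1)[OF x False]] by blast
  moreover have "pos_norm V N C ?x < c_plus V N C + \<eta>"
    using pos_norm_le_c_plus normalize_in_V[OF x False] \<eta> by fastforce
  ultimately obtain w where "w \<in> ?D" "w < c_plus V N C + \<eta>"
    unfolding pos_norm_def by (rule cInf_lessD[elim_format]) blast
  then obtain y z where yz: "y \<in> C" "z \<in> C" "?x = y - z" "N y + N z < c_plus V N C + \<eta>"
    by blast
  obtain p q where p: "p \<in> C" "N p \<le> 1" "y = N y *\<^sub>R p" and q: "q \<in> C" "N q \<le> 1" "z = N z *\<^sub>R q"
    using normalize_in_C yz(1,2) by metis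
  have yzV: "y \<in> V" "z \<in> V"
    using yz C_subset_V by auto
  have "x = N x *\<^sub>R ?x"
    using Nx by simp
  also have "\<dots> = (N x * N y) *\<^sub>R p - (N x * N z) *\<^sub>R q"
    using p(3) q(3) yz(3) by (metis scaleR_diff_right scaleR_scaleR)
  finally have eq: "x = (N x * N y) *\<^sub>R p - (N x * N z) *\<^sub>R q" .
  have le: "N x * N y + N x * N z \<le> (c_plus V N C + \<eta>) * N x"
    using yz(4) Nx by (simp add: distrib_left[symmetric] mult.commute)
  show ?thesis
    by (rule that[OF p(1) q(1) p(2) q(2) _ _ eq le]) (use Nx N_nonneg yzV in auto)
qed

lemma pis_plus_norm_nonneg: "0 \<le> pis_plus_norm V N C n t"
  unfolding pis_plus_norm_def using N_nonneg C_subset_V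
  by (auto intro!: Inf_greatest sum_nonneg mult_nonneg_nonneg zero_le_power simp: subset_iff)

lemma pi_norm_nonneg: "0 \<le> pi_norm V N n t"
  unfolding pi_norm_def using N_nonneg
  by (auto intro!: Inf_greatest sum_nonneg mult_nonneg_nonneg prod_nonneg)

lemma has_pos_rep_vee:
  assumes \<eta>: "0 < \<eta>" and k: "0 \<le> k"
    and normalized: "\<And>w. \<forall>i<n. w i \<in> C \<and> N (w i) \<le> 1 \<Longrightarrow> has_pos_rep V N C n (vee V n w) k"
  shows "m \<le> n \<Longrightarrow> \<forall>i<m. xs i \<in> V \<Longrightarrow> \<forall>i. m \<le> i \<and> i < n \<longrightarrow> xs i \<in> C \<and> N (xs i) \<le> 1 \<Longrightarrow>
    has_pos_rep V N C n (vee V n xs) (k * (c_plus V N C + \<eta>) ^ m * (\<Prod>i<m. N (xs i)))"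
proof (induction m arbitrary: xs)
  case 0
  then show ?case
    using normalized by simp
next
  case (Suc m)
  let ?c = "c_plus V N C + \<eta>"
  let ?K = "k * ?c ^ m * (\<Prod>i<m. N (xs i))"
  have m: "m < n"
    using Suc.prems(1) by simp
  have xs: "\<forall>j<n. xs j \<in> V"
    using Suc.prems(2,3) C_subset_V by (auto simp: not_less[symmetric])
  then have "xs m \<in> V"
    using m by simp
  then obtain a b p q where pq: "p \<in> C" "q \<in> C" "N p \<le> 1" "N q \<le> 1" and ab: "0 \<le> a" "0 \<le> b"
    and xs_m: "xs m = a *\<^sub>R p - b *\<^sub>R q" and cost: "a + b \<le> ?c * N (xs m)"
    by (rule normalized_cone_decomp[OF _ \<eta>])
  have IH: "has_pos_rep V N C n (vee V n (xs(m := u))) ?K" if "u \<in> C" "N u \<le> 1" for u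
  proof -
    have "has_pos_rep V N C n (vee V n (xs(m := u))) (k * ?c ^ m * (\<Prod>i<m. N ((xs(m := u)) i)))"
      using Suc.prems that by (intro Suc.IH) (auto simp: Suc_le_eq dest: le_neq_implies_less)
    then show ?thesis
      by simp
  qed
  have "vee V n xs = vee V n (xs(m := a *\<^sub>R p + (- b) *\<^sub>R q))"
    using xs_m by (intro arg_cong[where f = "vee V n"]) (auto simp: fun_eq_iff)
  also have "\<dots> = (\<lambda>\<phi>. a * vee V n (xs(m := p)) \<phi> + (- b) * vee V n (xs(m := q)) \<phi>)"
    using pq C_subset_V by (intro vee_update_lincomb[OF subspace m xs]) auto
  finally have vee_xs: "vee V n xs = (\<lambda>\<phi>. a * vee V n (xs(m := p)) \<phi> + (- b) * vee V n (xs(m := q)) \<phi>)" .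
  have rep: "has_pos_rep V N C n (vee V n xs) (\<bar>a\<bar> * ?K + \<bar>- b\<bar> * ?K)"
    unfolding vee_xs using pq by (intro has_pos_rep_add has_pos_rep_scale IH)
  have "0 \<le> ?K"
    using k \<eta> c_plus_nonneg N_nonneg xs m by (intro mult_nonneg_nonneg prod_nonneg) auto
  with cost have "(a + b) * ?K \<le> (?c * N (xs m)) * ?K"
    by (rule mult_right_mono)
  also have "\<dots> = k * ?c ^ Suc m * (\<Prod>i<Suc m. N (xs i))"
    by (simp add: algebra_simps)
  finally show ?case
    using ab by (intro has_pos_rep_mono[OF rep]) (simp add: algebra_simps)
qed

lemma nonneg_if_normalized_vee_bound:
  assumes "\<And>w. \<forall>i<n. w i \<in> C \<and> N (w i) \<le> 1 \<Longrightarrow> pis_plus_norm V N C n (vee V n w) \<le> \<kappa>"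
  shows "0 \<le> \<kappa>"
  using assms[of "\<lambda>_. 0"] zero_in_C N_zero pis_plus_norm_nonneg order_trans by fastforce

lemma pis_plus_norm_sym_tensor_le_approx:
  assumes normalized: "\<And>w. \<forall>i<n. w i \<in> C \<and> N (w i) \<le> 1 \<Longrightarrow> pis_plus_norm V N C n (vee V n w) \<le> ereal k"
    and t: "t \<in> sym_tensors V n" and pi: "pi_norm V N n t < ereal r" and \<eta>: "0 < \<eta>"
  shows "pis_plus_norm V N C n t \<le> ereal ((k + \<eta>) * (c_plus V N C + \<eta>) ^ n * r)"
proof -
  let ?c = "c_plus V N C + \<eta>"
  have k: "0 \<le> k"
    using nonneg_if_normalized_vee_bound[OF normalized] by simp
  obtain K :: nat and a xs where xs: "\<forall>j<K. \<forall>i<n. xs j i \<in> V"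
    and rep: "t = (\<lambda>\<phi>. \<Sum>j<K. a j * etensor V n (xs j) \<phi>)"
    and cost: "(\<Sum>j<K. \<bar>a j\<bar> * (\<Prod>i<n. N (xs j i))) < r"
    using pi unfolding pi_norm_def Inf_less_iff by auto
  have "has_pos_rep V N C n (vee V n w) (k + \<eta>)" if "\<forall>i<n. w i \<in> C \<and> N (w i) \<le> 1" for w
    using normalized[OF that] \<eta> by (intro has_pos_rep_if_pis_plus_norm_less) (simp add: le_less_trans)
  then have "\<forall>j\<in>{..<K}. has_pos_rep V N C n (vee V n (xs j)) ((k + \<eta>) * ?c ^ n * (\<Prod>i<n. N (xs j i)))"
    using has_pos_rep_vee[OF \<eta>, of "k + \<eta>" n n] xs k \<eta> by force
  then have "has_pos_rep V N C n t (\<Sum>j<K. \<bar>a j\<bar> * ((k + \<eta>) * ?c ^ n * (\<Prod>i<n. N (xs j i))))"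
    unfolding sym_tensor_eq_sum_vee[OF t rep] by (intro has_pos_rep_sum) simp_all
  moreover have "(\<Sum>j<K. \<bar>a j\<bar> * ((k + \<eta>) * ?c ^ n * (\<Prod>i<n. N (xs j i)))) \<le> (k + \<eta>) * ?c ^ n * r"
  proof -
    have "(\<Sum>j<K. \<bar>a j\<bar> * ((k + \<eta>) * ?c ^ n * (\<Prod>i<n. N (xs j i)))) =
        (k + \<eta>) * ?c ^ n * (\<Sum>j<K. \<bar>a j\<bar> * (\<Prod>i<n. N (xs j i)))"
      by (simp add: sum_distrib_left mult_ac)
    moreover have "0 \<le> (k + \<eta>) * ?c ^ n"
      using k \<eta> c_plus_nonneg by simp
    ultimately show ?thesis
      using cost by (simp add: mult_left_mono)
  qed
  ultimately show ?thesis
    by (intro pis_plus_norm_le_if_has_pos_rep) (rule has_pos_rep_mono)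
qed

lemma pis_plus_norm_sym_tensor_le:
  assumes normalized: "\<And>w. \<forall>i<n. w i \<in> C \<and> N (w i) \<le> 1 \<Longrightarrow> pis_plus_norm V N C n (vee V n w) \<le> ereal k"
    and t: "t \<in> sym_tensors V n" and pi: "pi_norm V N n t = ereal p"
  shows "pis_plus_norm V N C n t \<le> ereal (k * c_plus V N C ^ n * p)"
proof -
  let ?f = "\<lambda>\<eta>. (k + \<eta>) * (c_plus V N C + \<eta>) ^ n * (p + \<eta>)"
  have approx: "pis_plus_norm V N C n t \<le> ereal (?f \<eta>)" if "0 < \<eta>" for \<eta>
    using pis_plus_norm_sym_tensor_le_approx[OF normalized t _ that] pi that by simp
  obtain q where q: "pis_plus_norm V N C n t = ereal q"
    using approx[of 1] pis_plus_norm_nonneg[of n t] by (cases "pis_plus_norm V N C n t") auto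
  have "(?f \<longlongrightarrow> ?f 0) (at_right 0)"
    by (intro tendsto_intros)
  moreover have "\<forall>\<^sub>F \<eta> in at_right 0. q \<le> ?f \<eta>"
    using approx q eventually_at_right_less[of 0] by (auto elim: eventually_mono)
  ultimately have "q \<le> ?f 0"
    by (rule tendsto_lowerbound) simp
  then show ?thesis
    using q by simp
qed

lemma pi_norm_finite:
  assumes "t \<in> tensor_space V n"
  obtains p where "pi_norm V N n t = ereal p" "0 \<le> p"
proof -
  obtain K :: nat and a xs where "\<forall>k<K. \<forall>i<n. xs k i \<in> V" "t = (\<lambda>\<phi>. \<Sum>k<K. a k * etensor V n (xs k) \<phi>)"
    using assms unfolding tensor_space_def by blast
  then have "pi_norm V N n t \<le> ereal (\<Sum>k<K. \<bar>a k\<bar> * (\<Prod>i<n. N (xs k i)))"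
    unfolding pi_norm_def by (intro Inf_lower) blast
  then show ?thesis
    using that pi_norm_nonneg[of n t] by (cases "pi_norm V N n t") auto
qed

lemma sym_tensor_ratio_le:
  assumes normalized: "\<And>w. \<forall>i<n. w i \<in> C \<and> N (w i) \<le> 1 \<Longrightarrow> pis_plus_norm V N C n (vee V n w) \<le> ereal k"
    and t: "t \<in> sym_tensors V n"
  shows "pis_plus_norm V N C n t / pi_norm V N n t \<le> ereal (c_plus V N C ^ n * k)"
proof -
  obtain p where p: "pi_norm V N n t = ereal p" "0 \<le> p"
    using t unfolding sym_tensors_def by (blast elim: pi_norm_finite)
  have le: "pis_plus_norm V N C n t \<le> ereal (k * c_plus V N C ^ n * p)"
    by (rule pis_plus_norm_sym_tensor_le[OF normalized t p(1)])
  then obtain q where q: "pis_plus_norm V N C n t = ereal q" "0 \<le> q"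
    using pis_plus_norm_nonneg[of n t] by (cases "pis_plus_norm V N C n t") auto
  have "0 \<le> c_plus V N C ^ n * k"
    using c_plus_nonneg nonneg_if_normalized_vee_bound[OF normalized] by simp
  moreover have "q / p \<le> c_plus V N C ^ n * k" if "0 < p"
    using le q that by (simp add: divide_le_eq mult_ac)
  ultimately show ?thesis
    using p q le by (cases "p = 0") auto
qed

lemma c_pi_splus_le:
  assumes "\<And>w. \<forall>i<n. w i \<in> C \<and> N (w i) \<le> 1 \<Longrightarrow> pis_plus_norm V N C n (vee V n w) \<le> ereal k"
  shows "c_pi_splus n V N C \<le> ereal (c_plus V N C ^ n * k)"
  unfolding c_pi_splus_def
proof (rule Sup_least)
  fix r assume "r \<in> {pis_plus_norm V N C n t / pi_norm V N n t | t. t \<in> sym_tensors V n \<and> t \<noteq> (\<lambda>\<phi>. 0)}"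
  then obtain t where "r = pis_plus_norm V N C n t / pi_norm V N n t" "t \<in> sym_tensors V n"
    by blast
  then show "r \<le> ereal (c_plus V N C ^ n * k)"
    using sym_tensor_ratio_le[OF assms] by simp
qed

lemma exists_nonzero_if_tensor_nonzero:
  assumes "1 \<le> n" "t \<in> tensor_space V n" "t \<noteq> (\<lambda>\<phi>. 0)"
  obtains x where "x \<in> V" "x \<noteq> 0"
proof (rule ccontr)
  assume "\<not> thesis"
  then have V0: "\<forall>x\<in>V. x = 0"
    using that by blast
  obtain K :: nat and a xs where xs: "\<forall>k<K. \<forall>i<n. xs k i \<in> V"
    and t: "t = (\<lambda>\<phi>. \<Sum>k<K. a k * etensor V n (xs k) \<phi>)"
    using assms(2) unfolding tensor_space_def by blast
  have "etensor V n (xs k) \<phi> = 0" if "k < K" for k \<phi>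
    using multilinear_form_zero_slot[OF _ subspace, of n \<phi> 0 "xs k"] xs V0 assms(1) that
    unfolding etensor_def by auto
  then show False
    using assms(3) unfolding t by simp
qed

lemma c_pi_splus_div_le:
  assumes n: "1 \<le> n"
    and normalized: "\<And>w. \<forall>i<n. w i \<in> C \<and> N (w i) \<le> 1 \<Longrightarrow> pis_plus_norm V N C n (vee V n w) \<le> \<kappa>"
  shows "c_pi_splus n V N C / ereal (c_plus V N C ^ n) \<le> \<kappa>"
proof (cases \<kappa>)
  case (real k)
  show ?thesis
  proof (cases "\<exists>t. t \<in> sym_tensors V n \<and> t \<noteq> (\<lambda>\<phi>. 0)")
    case True
    then obtain t where "t \<in> tensor_space V n" "t \<noteq> (\<lambda>\<phi>. 0)"
      unfolding sym_tensors_def by blast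
    then obtain x where "x \<in> V" "x \<noteq> 0"
      by (rule exists_nonzero_if_tensor_nonzero[OF n])
    then have "0 < c_plus V N C ^ n"
      using one_le_c_plus by (intro zero_less_power) fastforce
    then show ?thesis
      using c_pi_splus_le[OF normalized[unfolded real]] real by (simp add: ereal_divide_le_pos mult.commute)
  next
    case False
    \<comment> \<open>Here c_plus may be 0, but the supremum of the empty set is -\<infinity>, even after division by 0.\<close>
    then have empty: "{pis_plus_norm V N C n t / pi_norm V N n t | t. t \<in> sym_tensors V n \<and> t \<noteq> (\<lambda>\<phi>. 0)} = {}"
      by blast
    have "c_pi_splus n V N C = - \<infinity>"
      unfolding c_pi_splus_def empty by (simp add: bot_ereal_def)
    then show ?thesis
      using c_plus_nonneg by (cases "c_plus V N C = 0") (simp_all add: divide_ereal_def)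
  qed
next
  case MInf
  then show ?thesis
    using nonneg_if_normalized_vee_bound[OF normalized] by simp
qed simp

lemma pis_plus_norm_vee_le_kappa:
  assumes w: "\<forall>i<n. w i \<in> C \<and> N (w i) \<le> 1"
  shows "pis_plus_norm V N C n (vee V n w) \<le> kappa n"
proof -
  define T where "T x = (\<Sum>i<n. x i *\<^sub>R w i)" for x :: "nat \<Rightarrow> real"
  have wV: "\<forall>i<n. w i \<in> V"
    using w C_subset_V by auto
  have "linear T"
    unfolding T_def by (rule linearI) (simp_all add: scaleR_add_left sum.distrib scaleR_sum_right)
  moreover have "T ` l1_V \<subseteq> V"
    using wV unfolding T_def by (auto intro!: subspace_sum[OF subspace] subspace_scale[OF subspace])
  moreover have "T ` l1_C \<subseteq> C"
    using w unfolding T_def l1_C_def by (auto intro!: C_sum C_scaleR)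
  moreover have "0 \<le> N (T u) \<and> N (T u) \<le> l1_N u" if u: "u \<in> l1_C" for u
  proof
    have "N (T u) \<le> (\<Sum>i<n. N (u i *\<^sub>R w i))"
      unfolding T_def using wV by (intro N_sum_le) (auto intro: subspace_scale[OF subspace])
    also have "\<dots> = (\<Sum>i<n. \<bar>u i\<bar> * N (w i))"
      using wV N_scaleR by simp
    also have "\<dots> \<le> (\<Sum>i<n. \<bar>u i\<bar>)"
      using w by (intro sum_mono) (simp add: mult_left_le)
    also have "\<dots> \<le> l1_N u"
      using u unfolding l1_N_def l1_C_def l1_V_def by (intro sum_le_suminf) auto
    finally show "N (T u) \<le> l1_N u" .
    show "0 \<le> N (T u)"
      using \<open>T ` l1_V \<subseteq> V\<close> u N_nonneg by (auto simp: l1_C_def)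
  qed
  ultimately have "pis_plus_norm V N C n (vee V n (T \<circ> ebasis)) \<le> kappa n"
    unfolding kappa_def by (intro pis_plus_norm_vee_image_le) (auto simp: l1_C_def)
  moreover have "(T \<circ> ebasis) i = w i" if "i < n" for i
    using that by (simp add: T_def ebasis_def if_distrib[of "\<lambda>c. c *\<^sub>R _"] cong: if_cong)
  ultimately show ?thesis
    using vee_cong[of n "T \<circ> ebasis" w] by simp
qed

end

lemma pis_plus_norm_vee_ebasis_le_c_pi_splus:
  fixes V :: "(nat \<Rightarrow> real) set"
  assumes "ordered_normed V N C" and e: "\<forall>i<n. ebasis i \<in> C \<and> N (ebasis i) = 1"
    and coord: "\<And>x j. x \<in> V \<Longrightarrow> \<bar>x j\<bar> \<le> N x"
  shows "pis_plus_norm V N C n (vee V n ebasis) \<le> c_pi_splus n V N C"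
proof -
  interpret ordered_normed V N C by fact
  let ?t = "vee V n ebasis"
  have eV: "\<forall>i<n. ebasis i \<in> V"
    using e C_subset_V by auto
  have "?t \<noteq> (\<lambda>\<phi>. 0)"
    using vee_ebasis_diag_form[of V n] by (auto dest: fun_cong[of _ _ "diag_form n"])
  then have sym: "?t \<in> sym_tensors V n \<and> ?t \<noteq> (\<lambda>\<phi>. 0)"
    using vee_in_sym_tensors[OF eV] by simp
  have "pi_norm V N n ?t \<le> 1"
    using pi_norm_vee_le_prod[OF eV, of N] e by (simp add: one_ereal_def)
  moreover have "ereal (1 / fact n) \<le> pi_norm V N n ?t"
    using pi_norm_vee_ebasis_ge[OF coord] .
  ultimately obtain p where p: "pi_norm V N n ?t = ereal p" "1 / fact n \<le> p" "p \<le> 1"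
    by (cases "pi_norm V N n ?t") auto
  have p0: "0 < p"
    by (rule less_le_trans[OF _ p(2)]) simp
  have "pis_plus_norm V N C n ?t \<le> pis_plus_norm V N C n ?t / pi_norm V N n ?t"
  proof (cases "pis_plus_norm V N C n ?t")
    case (real q)
    then have "q \<le> q / p"
      using p p0 pis_plus_norm_nonneg[of n ?t] by (simp add: le_divide_eq mult_left_le)
    then show ?thesis
      using real p p0 by simp
  qed (use p p0 in simp_all)
  also have "\<dots> \<le> c_pi_splus n V N C"
    unfolding c_pi_splus_def using sym by (intro Sup_upper) blast
  finally show ?thesis .
qed

subsection \<open>Coordinatewise ordered sequence spaces\<close>

definition pos_part :: "(nat \<Rightarrow> real) \<Rightarrow> nat \<Rightarrow> real"
  where "pos_part x i = max (x i) 0"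

definition neg_part :: "(nat \<Rightarrow> real) \<Rightarrow> nat \<Rightarrow> real"
  where "neg_part x i = max (- x i) 0"

lemma pos_part_minus_neg_part: "pos_part x - neg_part x = x"
  by (auto simp: pos_part_def neg_part_def fun_eq_iff)

locale coordinatewise_normed =
  fixes V :: "(nat \<Rightarrow> real) set" and N :: "(nat \<Rightarrow> real) \<Rightarrow> real"
  assumes is_norm: "is_norm_on V N"
    and abs_coord_le: "\<And>x j. x \<in> V \<Longrightarrow> \<bar>x j\<bar> \<le> N x"
    and pos_neg_part: "\<And>x. x \<in> V \<Longrightarrow>
      pos_part x \<in> V \<and> neg_part x \<in> V \<and> N (pos_part x) + N (neg_part x) \<le> N x"
begin

abbreviation nonneg_cone :: "(nat \<Rightarrow> real) set"
  where "nonneg_cone \<equiv> {x \<in> V. \<forall>i. 0 \<le> x i}"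

lemma subspace: "subspace V"
  using is_norm unfolding is_norm_on_def by blast

lemma pos_neg_part_in_cone: "x \<in> V \<Longrightarrow> pos_part x \<in> nonneg_cone \<and> neg_part x \<in> nonneg_cone"
  using pos_neg_part by (auto simp: pos_part_def neg_part_def)

lemma pos_norm_le_norm:
  assumes "x \<in> V"
  shows "pos_norm V N nonneg_cone x \<le> N x"
proof -
  have "N (pos_part x) + N (neg_part x) \<in> {N y + N z | y z. y \<in> nonneg_cone \<and> z \<in> nonneg_cone \<and> x = y - z}"
    using pos_neg_part_in_cone[OF assms] pos_part_minus_neg_part[of x] by force
  moreover have "bdd_below {N y + N z | y z. y \<in> nonneg_cone \<and> z \<in> nonneg_cone \<and> x = y - z}"
    using is_norm unfolding is_norm_on_def by (force intro!: bdd_belowI[of _ 0] add_nonneg_nonneg)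
  ultimately have "pos_norm V N nonneg_cone x \<le> N (pos_part x) + N (neg_part x)"
    unfolding pos_norm_def by (rule cInf_lower)
  then show ?thesis
    using pos_neg_part[OF assms] by linarith
qed

lemma closed_nonneg_cone:
  assumes C: "\<forall>k. X k \<in> nonneg_cone" and x: "x \<in> V" and lim: "(\<lambda>k. N (X k - x)) \<longlonglongrightarrow> 0"
  shows "x \<in> nonneg_cone"
proof -
  have "0 \<le> x i" for i
  proof (rule ccontr)
    assume "\<not> 0 \<le> x i"
    then have "0 < - x i"
      by simp
    then have "\<forall>\<^sub>F k in sequentially. N (X k - x) < - x i"
      by (rule order_tendstoD(2)[OF lim])
    then obtain k where k: "N (X k - x) < - x i"
      by (auto dest: eventually_happens)
    have "X k - x \<in> V"
      using C x by (intro subspace_diff[OF subspace]) auto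
    then have "\<bar>X k i - x i\<bar> \<le> N (X k - x)"
      using abs_coord_le by fastforce
    moreover have "0 \<le> X k i"
      using C by simp
    ultimately show False
      using k by linarith
  qed
  with x show ?thesis
    by simp
qed

lemma ordered_normed_space: "ordered_normed_space V N nonneg_cone"
proof -
  have "bdd_above {pos_norm V N nonneg_cone x | x. x \<in> V \<and> N x \<le> 1}"
    using pos_norm_le_norm by (force intro!: bdd_aboveI[of _ 1])
  moreover have "\<exists>y\<in>nonneg_cone. \<exists>z\<in>nonneg_cone. x = y - z" if "x \<in> V" for x
    using pos_neg_part_in_cone[OF that]
    by (intro bexI[of _ "pos_part x"] bexI[of _ "neg_part x"]) (simp_all add: pos_part_minus_neg_part)
  ultimately show ?thesis
    unfolding ordered_normed_space_def
    using is_norm subspace closed_nonneg_cone subspace_0[OF subspace]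
    by (auto simp: subspace_add subspace_scale)
qed

lemma c_plus_eq_1:
  assumes "x \<in> V" "N x = 1"
  shows "c_plus V N nonneg_cone = 1"
  unfolding c_plus_def
proof (rule cSup_eq_maximum)
  interpret ordered_normed V N nonneg_cone
    by (rule ordered_normed.intro[OF ordered_normed_space])
  show "1 \<in> {pos_norm V N nonneg_cone x | x. x \<in> V \<and> N x \<le> 1}"
    using pos_norm_le_norm[OF assms(1)] N_le_pos_norm[OF assms(1)] assms by force
  show "y \<le> 1" if "y \<in> {pos_norm V N nonneg_cone x | x. x \<in> V \<and> N x \<le> 1}" for y
    using that pos_norm_le_norm by force
qed

end

lemma summable_abs_add:
  fixes x y :: "nat \<Rightarrow> real"
  shows "summable (\<lambda>i. \<bar>x i\<bar>) \<Longrightarrow> summable (\<lambda>i. \<bar>y i\<bar>) \<Longrightarrow> summable (\<lambda>i. \<bar>x i + y i\<bar>)"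
  by (rule summable_rabs_comparison_test[of _ "\<lambda>i. \<bar>x i\<bar> + \<bar>y i\<bar>"]) (auto intro: summable_add)

lemma is_norm_on_l1: "is_norm_on l1_V l1_N"
  unfolding is_norm_on_def
proof (intro conjI ballI allI)
  show "subspace l1_V"
    unfolding subspace_def l1_V_def by (auto simp: summable_abs_add abs_mult intro: summable_mult)
next
  fix x assume "x \<in> l1_V"
  then have s: "summable (\<lambda>i. \<bar>x i\<bar>)"
    by (simp add: l1_V_def)
  show "0 \<le> l1_N x"
    unfolding l1_N_def by (rule suminf_nonneg[OF s]) simp
  show "l1_N x = 0 \<longleftrightarrow> x = 0"
    unfolding l1_N_def using suminf_eq_zero_iff[OF s] by (auto simp: fun_eq_iff)
  show "l1_N (c *\<^sub>R x) = \<bar>c\<bar> * l1_N x" for c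
    unfolding l1_N_def using suminf_mult[OF s, of "\<bar>c\<bar>"] by (simp add: abs_mult)
next
  fix x y assume "x \<in> l1_V" "y \<in> l1_V"
  then have s: "summable (\<lambda>i. \<bar>x i\<bar>)" "summable (\<lambda>i. \<bar>y i\<bar>)"
    by (auto simp: l1_V_def)
  have "(\<Sum>i. \<bar>x i + y i\<bar>) \<le> (\<Sum>i. \<bar>x i\<bar> + \<bar>y i\<bar>)"
    by (rule suminf_le) (auto intro: summable_abs_add s summable_add abs_triangle_ineq)
  also have "\<dots> = (\<Sum>i. \<bar>x i\<bar>) + (\<Sum>i. \<bar>y i\<bar>)"
    using suminf_add[OF s] by simp
  finally show "l1_N (x + y) \<le> l1_N x + l1_N y"
    unfolding l1_N_def by simp
qed

lemma abs_le_l1_N: "x \<in> l1_V \<Longrightarrow> \<bar>x j\<bar> \<le> l1_N x"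
  unfolding l1_N_def l1_V_def using sum_le_suminf[of "\<lambda>i. \<bar>x i\<bar>" "{j}"] by simp

lemma sum_abs_le_l1_N: "x \<in> l1_V \<Longrightarrow> (\<Sum>i<n. \<bar>x i\<bar>) \<le> l1_N x"
  unfolding l1_N_def l1_V_def by (intro sum_le_suminf) auto

interpretation l1: coordinatewise_normed l1_V l1_N
proof
  fix x assume "x \<in> l1_V"
  then have s: "summable (\<lambda>i. \<bar>x i\<bar>)"
    by (simp add: l1_V_def)
  have sp: "summable (\<lambda>i. \<bar>pos_part x i\<bar>)"
    by (rule summable_rabs_comparison_test[of _ "\<lambda>i. \<bar>x i\<bar>"]) (use s in \<open>auto simp: pos_part_def\<close>)
  have sn: "summable (\<lambda>i. \<bar>neg_part x i\<bar>)"
    by (rule summable_rabs_comparison_test[of _ "\<lambda>i. \<bar>x i\<bar>"]) (use s in \<open>auto simp: neg_part_def\<close>)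
  have "l1_N (pos_part x) + l1_N (neg_part x) = (\<Sum>i. \<bar>pos_part x i\<bar> + \<bar>neg_part x i\<bar>)"
    unfolding l1_N_def using suminf_add[OF sp sn] .
  also have "\<dots> = l1_N x"
    unfolding l1_N_def by (rule arg_cong[where f = suminf]) (auto simp: pos_part_def neg_part_def fun_eq_iff)
  finally show "pos_part x \<in> l1_V \<and> neg_part x \<in> l1_V \<and> l1_N (pos_part x) + l1_N (neg_part x) \<le> l1_N x"
    using sp sn by (simp add: l1_V_def)
qed (use is_norm_on_l1 abs_le_l1_N in auto)

lemma ebasis_in_l1: "ebasis i \<in> l1_C" "l1_N (ebasis i) = 1"
proof -
  have abs_e: "(\<lambda>j. \<bar>ebasis i j\<bar>) = (\<lambda>j. if j = i then 1 else 0)"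
    by (auto simp: ebasis_def fun_eq_iff)
  then show "ebasis i \<in> l1_C"
    by (simp add: l1_C_def l1_V_def ebasis_def summable_finite[of "{i}"])
  show "l1_N (ebasis i) = 1"
    unfolding l1_N_def abs_e by (subst suminf_finite[of "{i}"]) auto
qed

lemma ordered_normed_space_l1: "ordered_normed_space l1_V l1_N l1_C"
  using l1.ordered_normed_space unfolding l1_C_def .

lemma c_plus_l1: "c_plus l1_V l1_N l1_C = 1"
  using l1.c_plus_eq_1 ebasis_in_l1 unfolding l1_C_def by blast

lemma is_norm_on_l1fin: "is_norm_on (l1fin_V m) (l1fin_N m)"
  unfolding is_norm_on_def
proof (intro conjI ballI allI)
  show "subspace (l1fin_V m)"
    unfolding subspace_def l1fin_V_def by auto
next
  fix x assume x: "x \<in> l1fin_V m"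
  show "0 \<le> l1fin_N m x"
    unfolding l1fin_N_def by (simp add: sum_nonneg)
  show "l1fin_N m x = 0 \<longleftrightarrow> x = 0"
  proof
    assume "l1fin_N m x = 0"
    then have "\<forall>i<m. x i = 0"
      unfolding l1fin_N_def by (subst (asm) sum_nonneg_eq_0_iff) auto
    then show "x = 0"
      using x by (auto simp: l1fin_V_def fun_eq_iff not_less[symmetric])
  qed (simp add: l1fin_N_def)
  show "l1fin_N m (c *\<^sub>R x) = \<bar>c\<bar> * l1fin_N m x" for c
    unfolding l1fin_N_def by (simp add: abs_mult sum_distrib_left)
next
  fix x y
  show "l1fin_N m (x + y) \<le> l1fin_N m x + l1fin_N m y"
    unfolding l1fin_N_def by (simp add: sum.distrib[symmetric] sum_mono abs_triangle_ineq)
qed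

interpretation l1fin: coordinatewise_normed "l1fin_V m" "l1fin_N m" for m
proof
  fix x j assume "x \<in> l1fin_V m"
  then show "\<bar>x j\<bar> \<le> l1fin_N m x"
    unfolding l1fin_N_def l1fin_V_def by (cases "j < m") (auto intro: member_le_sum sum_nonneg)
qed (use is_norm_on_l1fin in \<open>auto simp: l1fin_V_def l1fin_N_def pos_part_def neg_part_def
      sum.distrib[symmetric] intro!: sum_mono\<close>)

lemma ebasis_in_l1fin: "i < m \<Longrightarrow> ebasis i \<in> l1fin_C m \<and> l1fin_N m (ebasis i) = 1"
  unfolding l1fin_C_def l1fin_V_def l1fin_N_def ebasis_def
  by (simp add: if_distrib[of abs] sum.delta cong: if_cong)

lemma ordered_normed_space_l1fin: "ordered_normed_space (l1fin_V m) (l1fin_N m) (l1fin_C m)"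
  using l1fin.ordered_normed_space unfolding l1fin_C_def .

lemma c_plus_l1fin: "1 \<le> m \<Longrightarrow> c_plus (l1fin_V m) (l1fin_N m) (l1fin_C m) = 1"
  using l1fin.c_plus_eq_1 ebasis_in_l1fin[of 0 m] unfolding l1fin_C_def by auto

subsection \<open>The value of the positive polarization constant\<close>

lemma kappa_le_l1fin:
  assumes "n \<le> m"
  shows "kappa n \<le> pis_plus_norm (l1fin_V m) (l1fin_N m) (l1fin_C m) n (vee (l1fin_V m) n ebasis)"
proof -
  have l1fin_V_subset: "l1fin_V m \<subseteq> l1_V"
    unfolding l1fin_V_def l1_V_def by (auto intro!: summable_finite[of "{..<m}"] simp: not_less[symmetric])
  have "l1_N x = l1fin_N m x" if "x \<in> l1fin_V m" for x
    unfolding l1_N_def l1fin_N_def using that by (intro suminf_finite) (auto simp: l1fin_V_def)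
  then have "pis_plus_norm l1_V l1_N l1_C n (vee l1_V n (id \<circ> ebasis))
      \<le> pis_plus_norm (l1fin_V m) (l1fin_N m) (l1fin_C m) n (vee (l1fin_V m) n ebasis)"
    using l1fin_V_subset is_norm_on_l1fin[of m]
    by (intro pis_plus_norm_vee_image_le) (auto simp: l1fin_C_def l1_C_def is_norm_on_def linear_id)
  then show ?thesis
    unfolding kappa_def by simp
qed

lemma l1fin_le_kappa:
  "pis_plus_norm (l1fin_V n) (l1fin_N n) (l1fin_C n) n (vee (l1fin_V n) n ebasis) \<le> kappa n"
proof -
  define T :: "(nat \<Rightarrow> real) \<Rightarrow> nat \<Rightarrow> real" where "T x i = (if i < n then x i else 0)" for x i
  have "linear T"
    by (rule linearI) (auto simp: T_def fun_eq_iff)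
  moreover have "T ` l1_V \<subseteq> l1fin_V n" "T ` l1_C \<subseteq> l1fin_C n"
    by (auto simp: T_def l1fin_V_def l1fin_C_def l1_C_def)
  moreover have "0 \<le> l1fin_N n (T u) \<and> l1fin_N n (T u) \<le> l1_N u" if "u \<in> l1_C" for u
    using sum_abs_le_l1_N[of u n] that by (simp add: T_def l1fin_N_def l1_C_def sum_nonneg)
  ultimately have "pis_plus_norm (l1fin_V n) (l1fin_N n) (l1fin_C n) n (vee (l1fin_V n) n (T \<circ> ebasis)) \<le> kappa n"
    unfolding kappa_def by (intro pis_plus_norm_vee_image_le) (auto simp: l1_C_def)
  moreover have "vee (l1fin_V n) n (T \<circ> ebasis) = vee (l1fin_V n) n ebasis"
    by (rule vee_cong) (auto simp: T_def ebasis_def fun_eq_iff)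
  ultimately show ?thesis
    by simp
qed

lemma c_pi_splus_div_le_kappa:
  assumes "ordered_normed_space V N C" "1 \<le> n"
  shows "c_pi_splus n V N C / ereal (c_plus V N C ^ n) \<le> kappa n"
proof -
  interpret ordered_normed V N C
    by (rule ordered_normed.intro) fact
  show ?thesis
    using c_pi_splus_div_le[OF assms(2) pis_plus_norm_vee_le_kappa] by blast
qed

lemma c_pi_splus_le_kappa:
  assumes "ordered_normed_space V N C" "1 \<le> n" "c_plus V N C = 1"
  shows "c_pi_splus n V N C \<le> kappa n"
  using c_pi_splus_div_le_kappa[OF assms(1,2)] assms(3) by (simp add: one_ereal_def[symmetric])

lemma c_pi_splus_l1fin:
  assumes "1 \<le> n" "n \<le> m"
  shows "c_pi_splus n (l1fin_V m) (l1fin_N m) (l1fin_C m) = kappa n"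
proof (rule antisym)
  show "c_pi_splus n (l1fin_V m) (l1fin_N m) (l1fin_C m) \<le> kappa n"
    using assms by (intro c_pi_splus_le_kappa ordered_normed_space_l1fin c_plus_l1fin) auto
  have "pis_plus_norm (l1fin_V m) (l1fin_N m) (l1fin_C m) n (vee (l1fin_V m) n ebasis)
      \<le> c_pi_splus n (l1fin_V m) (l1fin_N m) (l1fin_C m)"
    using ebasis_in_l1fin assms(2) l1fin.abs_coord_le
    by (intro pis_plus_norm_vee_ebasis_le_c_pi_splus ordered_normed.intro ordered_normed_space_l1fin) auto
  with kappa_le_l1fin[OF assms(2)] show "kappa n \<le> c_pi_splus n (l1fin_V m) (l1fin_N m) (l1fin_C m)"
    by (rule order_trans)
qed

lemma c_pi_splus_l1:
  assumes "1 \<le> n"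
  shows "c_pi_splus n l1_V l1_N l1_C = kappa n"
proof (rule antisym)
  show "c_pi_splus n l1_V l1_N l1_C \<le> kappa n"
    using assms by (intro c_pi_splus_le_kappa ordered_normed_space_l1 c_plus_l1)
  show "kappa n \<le> c_pi_splus n l1_V l1_N l1_C"
    unfolding kappa_def using ebasis_in_l1 abs_le_l1_N
    by (intro pis_plus_norm_vee_ebasis_le_c_pi_splus ordered_normed.intro ordered_normed_space_l1) auto
qed

theorem theorem5p1:
  fixes n :: nat
  assumes "n \<ge> 1"
  shows
    "(kappa n = pis_plus_norm (l1fin_V n) (l1fin_N n) (l1fin_C n) n (vee (l1fin_V n) n ebasis))
   \<and> (\<forall>m::nat. n \<le> m \<longrightarrow> c_pi_splus n (l1fin_V m) (l1fin_N m) (l1fin_C m) = kappa n)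
   \<and> (c_pi_splus n l1_V l1_N l1_C = kappa n)
   \<and> (\<forall>(V::'a::real_vector set) N C. ordered_normed_space V N C \<longrightarrow>
        c_pi_splus n V N C / ereal (c_plus V N C ^ n) \<le> kappa n)
   \<and> (\<forall>(V::'a::real_vector set) N C. ordered_normed_space V N C \<and> c_plus V N C = 1 \<longrightarrow>
        c_pi_splus n V N C \<le> kappa n)
   \<and> (ordered_normed_space l1_V l1_N l1_C)
   \<and> (c_plus l1_V l1_N l1_C = 1)
   \<and> (ordered_normed_space (l1fin_V n) (l1fin_N n) (l1fin_C n))
   \<and> (c_plus (l1fin_V n) (l1fin_N n) (l1fin_C n) = 1)
   \<and> (c_pi_splus n (l1fin_V n) (l1fin_N n) (l1fin_C n) = kappa n)"
  using assms antisym[OF kappa_le_l1fin[OF order.refl] l1fin_le_kappa] c_pi_splus_l1fin c_pi_splus_l1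
    c_pi_splus_div_le_kappa c_pi_splus_le_kappa ordered_normed_space_l1 c_plus_l1
    ordered_normed_space_l1fin c_plus_l1fin
  by auto

end
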